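(* Let $n\ge1$, $N=\{1,\dots,n\}$, $A=(a_{ij})\in[0,1]^{n\times n}$, $b=(b_1,\dots,b_n)$ with $b_i>0$, assume $\check\alpha_j\le1$ for all $j\in N$, and let $\lambda\in[0,+\infty)$. Let $p=(p_1,\dots,p_n)\in P$ and let $x\in[0,1]^n$ satisfy $$\begin{cases} x_j=d_{0j}=1 & \text{for all } j\in N^*,\\ d_{(p_j-1)j}\le x_j\le d_{p_jj} & \text{for all } j\in N\setminus N^*,\\ \sum_{j\in N^*}a_{ij}+\sum_{j\in N\setminus N^*}\big[\gamma_{ij}\,x_j+(1-\gamma_{ij})\,a_{ij}\big]\ge b_i & \text{for all } i\in N,\\ \sum_{j\in N^*}a_{ij}+\sum_{j\in N\setminus N^*}\big[\gamma_{ij}\,x_j+(1-\gamma_{ij})\,a_{ij}\big]=\lambda x_i & \text{for all } i\in N.\end{cases}$$ Then $x\in V^*(A,\lambda)$.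
   Context: $\theta=(0,\dots,0)$. For $x\in[0,1]^n$, $(A\odot x^T)_i=\sum_{j\in N}\min\{a_{ij},x_j\}$. $V^*(A,\lambda)=\{x\in[0,1]^n: (A\odot x^T)_i\ge b_i \text{ and } (A\odot x^T)_i=\lambda x_i \text{ for all } i\in N,\ x\neq\theta\}$. $\check\alpha_j=\max\big(\{0\}\cup\{b_i-\sum_{k\in N\setminus\{j\}}a_{ik}: i\in N\}\big)$. $D_j=\{d_{0j}<\dots<d_{l_jj}\}$ is the set $\{\check\alpha_j\}\cup\{a_{ij}: i\in N,\ a_{ij}\ge\check\alpha_j\}\cup\{1\}$ listed increasingly. $N^*=\{j\in N:\check\alpha_j=1\}$; $P_j=\{0\}$ for $j\in N^*$ and $P_j=\{1,\dots,l_j\}$ (indices with $d_{pj}>\check\alpha_j$) for $j\in N\setminus N^*$; $P=P_1\times\dots\times P_n$. For $p\in P$, $i\in N$, $j\in N\setminus N^*$: $\gamma_{ij}=1$ if $d_{p_jj}\le a_{ij}$ and $\gamma_{ij}=0$ if $a_{ij}\le d_{(p_j-1)j}$. *)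

theory Defs
  imports Main Complex_Main
begin

text \<open>Index set N = {1..n}; matrices are functions nat => nat => real,
vectors are functions nat => real, only values on N matter.\<close>

definition Nset :: "nat \<Rightarrow> nat set" where
  "Nset n = {1..n}"

definition maxmin_prod :: "nat \<Rightarrow> (nat \<Rightarrow> nat \<Rightarrow> real) \<Rightarrow> (nat \<Rightarrow> real) \<Rightarrow> nat \<Rightarrow> real" where
  "maxmin_prod n A x i = (\<Sum>j\<in>Nset n. min (A i j) (x j))"

definition Vstar :: "nat \<Rightarrow> (nat \<Rightarrow> nat \<Rightarrow> real) \<Rightarrow> (nat \<Rightarrow> real) \<Rightarrow> real \<Rightarrow> (nat \<Rightarrow> real) set" where
  "Vstar n A b lam = {x. (\<forall>j\<in>Nset n. 0 \<le> x j \<and> x j \<le> 1)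
      \<and> (\<forall>i\<in>Nset n. maxmin_prod n A x i \<ge> b i \<and> maxmin_prod n A x i = lam * x i)
      \<and> (\<exists>j\<in>Nset n. x j \<noteq> 0)}"

definition alpha_check :: "nat \<Rightarrow> (nat \<Rightarrow> nat \<Rightarrow> real) \<Rightarrow> (nat \<Rightarrow> real) \<Rightarrow> nat \<Rightarrow> real" where
  "alpha_check n A b j = Max ({0} \<union> {b i - (\<Sum>k\<in>Nset n - {j}. A i k) | i. i \<in> Nset n})"

definition Dset :: "nat \<Rightarrow> (nat \<Rightarrow> nat \<Rightarrow> real) \<Rightarrow> (nat \<Rightarrow> real) \<Rightarrow> nat \<Rightarrow> real set" where
  "Dset n A b j = {alpha_check n A b j} \<union> {A i j | i. i \<in> Nset n \<and> A i j \<ge> alpha_check n A b j} \<union> {1}"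

definition lidx :: "nat \<Rightarrow> (nat \<Rightarrow> nat \<Rightarrow> real) \<Rightarrow> (nat \<Rightarrow> real) \<Rightarrow> nat \<Rightarrow> nat" where
  "lidx n A b j = card (Dset n A b j) - 1"

text \<open>d_pj: the p-th element (0-based) of D_j in increasing order\<close>
definition dval :: "nat \<Rightarrow> (nat \<Rightarrow> nat \<Rightarrow> real) \<Rightarrow> (nat \<Rightarrow> real) \<Rightarrow> nat \<Rightarrow> nat \<Rightarrow> real" where
  "dval n A b p j = sorted_list_of_set (Dset n A b j) ! p"

definition Nstar :: "nat \<Rightarrow> (nat \<Rightarrow> nat \<Rightarrow> real) \<Rightarrow> (nat \<Rightarrow> real) \<Rightarrow> nat set" where
  "Nstar n A b = {j \<in> Nset n. alpha_check n A b j = 1}"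

definition Pj :: "nat \<Rightarrow> (nat \<Rightarrow> nat \<Rightarrow> real) \<Rightarrow> (nat \<Rightarrow> real) \<Rightarrow> nat \<Rightarrow> nat set" where
  "Pj n A b j = (if j \<in> Nstar n A b then {0} else {1..lidx n A b j})"

text \<open>P = P_1 x ... x P_n, tuples represented as functions nat => nat (values on N)\<close>
definition Pset :: "nat \<Rightarrow> (nat \<Rightarrow> nat \<Rightarrow> real) \<Rightarrow> (nat \<Rightarrow> real) \<Rightarrow> (nat \<Rightarrow> nat) set" where
  "Pset n A b = {p. \<forall>j\<in>Nset n. p j \<in> Pj n A b j}"

text \<open>gamma_ij = 1 if d_(p_j)j <= a_ij, and 0 if a_ij <= d_(p_j - 1)j
  (exactly one case occurs, since consecutive elements of D_j bracket no a_ij).\<close>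
definition gamma :: "nat \<Rightarrow> (nat \<Rightarrow> nat \<Rightarrow> real) \<Rightarrow> (nat \<Rightarrow> real) \<Rightarrow> (nat \<Rightarrow> nat) \<Rightarrow> nat \<Rightarrow> nat \<Rightarrow> real" where
  "gamma n A b p i j = (if dval n A b (p j) j \<le> A i j then 1 else 0)"

end

theory Submission
  imports Defs
begin

text \<open>On N* we have x_j = 1 \<ge> a_ij, so min(a_ij, x_j) = a_ij. Off N*, x_j lies between
  the consecutive elements d_(p_j - 1)j and d_(p_j)j of D_j, and no entry a_ij lies strictly between
  them: entries \<ge> alpha_j belong to D_j, smaller ones lie below its least element alpha_j.
  So min(a_ij, x_j) is x_j or a_ij according to gamma_ij, i.e. the linear system is the max-min
  system, and x is nonzero because lam x_1 \<ge> b_1 > 0.\<close>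

lemma sorted_list_of_set_nth_pred_ge:
  fixes S :: "'a::linorder set"
  assumes "finite S" "y \<in> S" "1 \<le> k" "k < card S" "y < sorted_list_of_set S ! k"
  shows "y \<le> sorted_list_of_set S ! (k - 1)"
proof -
  let ?L = "sorted_list_of_set S"
  obtain m where m: "m < length ?L" "?L ! m = y"
    using assms(1,2) by (metis in_set_conv_nth set_sorted_list_of_set)
  have "m < k"
  proof (rule ccontr)
    assume "\<not> m < k"
    then have "?L ! k \<le> ?L ! m" using m(1) by (simp add: sorted_nth_mono)
    then show False using m(2) assms(5) by simp
  qed
  then show ?thesis using m assms(4) sorted_nth_mono[of ?L m "k - 1"] by simp
qed

lemma finite_Dset: "finite (Dset n A b j)"
proof -
  have "{A i j | i. i \<in> Nset n \<and> A i j \<ge> alpha_check n A b j} \<subseteq> (\<lambda>i. A i j) ` Nset n"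
    by auto
  then show ?thesis
    unfolding Dset_def Nset_def by (auto intro: finite_subset)
qed

lemma alpha_check_le_Dset:
  assumes "alpha_check n A b j \<le> 1" "d \<in> Dset n A b j"
  shows "alpha_check n A b j \<le> d"
  using assms unfolding Dset_def by auto

lemma dval_in_Dset:
  assumes "k < card (Dset n A b j)"
  shows "dval n A b k j \<in> Dset n A b j"
  using assms finite_Dset unfolding dval_def by (metis length_sorted_list_of_set nth_mem set_sorted_list_of_set)

lemma Pset_index_bounds:
  assumes "p \<in> Pset n A b" "j \<in> Nset n - Nstar n A b"
  shows "1 \<le> p j" "p j < card (Dset n A b j)"
proof -
  have "Dset n A b j \<noteq> {}" unfolding Dset_def by auto
  then have "card (Dset n A b j) > 0" using finite_Dset by (simp add: card_gt_0_iff)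
  moreover have "p j \<in> {1..lidx n A b j}" using assms unfolding Pset_def Pj_def by auto
  ultimately show "1 \<le> p j" "p j < card (Dset n A b j)" unfolding lidx_def by auto
qed

lemma entry_le_dval_pred:
  assumes "alpha_check n A b j \<le> 1" "i \<in> Nset n"
    and "1 \<le> k" "k < card (Dset n A b j)" "A i j < dval n A b k j"
  shows "A i j \<le> dval n A b (k - 1) j"
proof (cases "alpha_check n A b j \<le> A i j")
  case True
  then have "A i j \<in> Dset n A b j" using assms(2) unfolding Dset_def by auto
  then show ?thesis
    using sorted_list_of_set_nth_pred_ge[OF finite_Dset _ assms(3-4)] assms(5)
    unfolding dval_def by simp
next
  case False
  have "dval n A b (k - 1) j \<in> Dset n A b j" using assms(4) by (intro dval_in_Dset) simp
  then show ?thesis using False alpha_check_le_Dset[OF assms(1)] by fastforce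
qed

lemma min_eq_if_bracketed:
  fixes a x lo hi :: real
  assumes "lo \<le> x" "x \<le> hi" "a < hi \<Longrightarrow> a \<le> lo"
  shows "min a x = (if hi \<le> a then x else a)"
  using assms by auto

lemma maxmin_prod_eq_linearization:
  assumes A: "\<forall>i\<in>Nset n. \<forall>j\<in>Nset n. 0 \<le> A i j \<and> A i j \<le> 1"
    and alpha: "\<forall>j\<in>Nset n. alpha_check n A b j \<le> 1"
    and p: "p \<in> Pset n A b"
    and x_Nstar: "\<forall>j\<in>Nstar n A b. x j = 1"
    and x_bracket: "\<forall>j\<in>Nset n - Nstar n A b. dval n A b (p j - 1) j \<le> x j \<and> x j \<le> dval n A b (p j) j"
    and i: "i \<in> Nset n"
  shows "maxmin_prod n A x i = (\<Sum>j\<in>Nstar n A b. A i j)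
           + (\<Sum>j\<in>Nset n - Nstar n A b. gamma n A b p i j * x j + (1 - gamma n A b p i j) * A i j)"
proof -
  have sub: "Nstar n A b \<subseteq> Nset n" unfolding Nstar_def by auto
  have "maxmin_prod n A x i = (\<Sum>j\<in>Nstar n A b. min (A i j) (x j))
      + (\<Sum>j\<in>Nset n - Nstar n A b. min (A i j) (x j))"
    unfolding maxmin_prod_def using sum.subset_diff[OF sub] by (simp add: Nset_def add.commute)
  also have "(\<Sum>j\<in>Nstar n A b. min (A i j) (x j)) = (\<Sum>j\<in>Nstar n A b. A i j)"
    using A x_Nstar i sub by (intro sum.cong) auto
  also have "(\<Sum>j\<in>Nset n - Nstar n A b. min (A i j) (x j)) =
      (\<Sum>j\<in>Nset n - Nstar n A b. gamma n A b p i j * x j + (1 - gamma n A b p i j) * A i j)"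
  proof (rule sum.cong)
    fix j assume j: "j \<in> Nset n - Nstar n A b"
    have "A i j \<le> dval n A b (p j - 1) j" if "A i j < dval n A b (p j) j"
      using entry_le_dval_pred alpha i j Pset_index_bounds[OF p j] that by blast
    then have "min (A i j) (x j) = (if dval n A b (p j) j \<le> A i j then x j else A i j)"
      using x_bracket j by (intro min_eq_if_bracketed) auto
    then show "min (A i j) (x j) = gamma n A b p i j * x j + (1 - gamma n A b p i j) * A i j"
      unfolding gamma_def by simp
  qed simp
  finally show ?thesis .
qed

theorem theorem4p3:
  fixes n :: nat and A :: "nat \<Rightarrow> nat \<Rightarrow> real" and b :: "nat \<Rightarrow> real"
    and lam :: real and p :: "nat \<Rightarrow> nat" and x :: "nat \<Rightarrow> real"
  assumes "n \<ge> 1"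
    and "\<forall>i\<in>Nset n. \<forall>j\<in>Nset n. 0 \<le> A i j \<and> A i j \<le> 1"
    and "\<forall>i\<in>Nset n. b i > 0"
    and "\<forall>j\<in>Nset n. alpha_check n A b j \<le> 1"
    and "lam \<ge> 0"
    and "p \<in> Pset n A b"
    and "\<forall>j\<in>Nset n. 0 \<le> x j \<and> x j \<le> 1"
    and "\<forall>j\<in>Nstar n A b. x j = dval n A b 0 j \<and> dval n A b 0 j = 1"
    and "\<forall>j\<in>Nset n - Nstar n A b. dval n A b (p j - 1) j \<le> x j \<and> x j \<le> dval n A b (p j) j"
    and "\<forall>i\<in>Nset n. (\<Sum>j\<in>Nstar n A b. A i j)
           + (\<Sum>j\<in>Nset n - Nstar n A b. gamma n A b p i j * x j + (1 - gamma n A b p i j) * A i j) \<ge> b i"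
    and "\<forall>i\<in>Nset n. (\<Sum>j\<in>Nstar n A b. A i j)
           + (\<Sum>j\<in>Nset n - Nstar n A b. gamma n A b p i j * x j + (1 - gamma n A b p i j) * A i j) = lam * x i"
  shows "x \<in> Vstar n A b lam"
proof -
  have system: "maxmin_prod n A x i \<ge> b i \<and> maxmin_prod n A x i = lam * x i"
    if "i \<in> Nset n" for i
    using maxmin_prod_eq_linearization[OF assms(2,4,6) _ assms(9) that] assms(8,10,11) that
    by auto
  have one: "1 \<in> Nset n" using assms(1) unfolding Nset_def by simp
  then have "x 1 \<noteq> 0" using system[OF one] assms(3) by fastforce
  then show ?thesis unfolding Vstar_def using assms(7) system one by blast
qed

end
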